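(* Let $G_1$ and $G_2$ be graphs with a common vertex set $V$ (of size $n$), let $\{V_1,\dots,V_m\}$ be a partition of $V$, and suppose there is a unital $C^*$-algebra $\mathcal{A}$ and a quantum permutation matrix $u\in M_n(\mathcal{A})$ with $uA_{G_1}=A_{G_2}u$ that is block diagonal with respect to $\{V_1,\dots,V_m\}$, i.e. $u_{ab}=0$ whenever $a$ and $b$ lie in different parts. Let $\{S_1,\dots,S_{k+1}\}$ be a partition of $\{1,\dots,m\}$ and define the partition $\pi=\{C_1,\dots,C_k,D\}$ of $V$ by $C_i:=\bigcup_{s\in S_i}V_s$ ($1\le i\le k$) and $D:=\bigcup_{s\in S_{k+1}}V_s$. If both $G_1$ and $G_2$ satisfy the Godsil–McKay conditions (i) and (ii) with respect to $\pi$, then the switched graphs $G_1^{\pi,D}$ and $G_2^{\pi,D}$ are quantum isomorphic.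
   Context: A quantum permutation matrix over a unital $C^*$-algebra $\mathcal{A}$ is $u=(u_{ij})\in M_n(\mathcal{A})$ with $u_{ij}=u_{ij}^*=u_{ij}^2$ and $\sum_ku_{ik}=1=\sum_ku_{ki}$ for all $i$. Graphs $G_1,G_2$ on $n$ vertices are quantum isomorphic if there is a unital $C^*$-algebra $\mathcal{A}$ and a quantum permutation matrix $u\in M_n(\mathcal{A})$ with $A_{G_1}u=uA_{G_2}$, where $A_G$ is the adjacency matrix. Godsil–McKay switching: given a graph $G$ and a partition $\pi=\{C_1,\dots,C_k,D\}$ of $V(G)$ with $n_i=|C_i|$, the conditions are (i) for all $1\le i,j\le k$, any two vertices in $C_i$ have the same number of neighbours in $C_j$; (ii) each $v\in D$ has either $0$, $n_i/2$ or $n_i$ neighbours in $C_i$, for each $i$. The graph $G^{\pi,D}$ is obtained by, for each $v\in D$ and each $i$ such that $v$ has exactly $n_i/2$ neighbours in $C_i$, deleting these $n_i/2$ edges and joining $v$ instead to the other $n_i/2$ vertices of $C_i$. *)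

theory Defs
  imports "HOL-Analysis.Analysis"
begin

text \<open>Unital C*-algebras: a complex Banach algebra with unit (norm 1 = 1), an
 involution, and the C*-identity.  The complex scalar action is an extra operation
 extending the real one.\<close>
class cstar_algebra = real_normed_algebra_1 + banach +
  fixes cstar :: "'a \<Rightarrow> 'a"
    and scaleC :: "complex \<Rightarrow> 'a \<Rightarrow> 'a"
  assumes scaleC_of_real: "scaleC (complex_of_real r) x = scaleR r x"
    and scaleC_add_left: "scaleC (a + b) x = scaleC a x + scaleC b x"
    and scaleC_add_right: "scaleC a (x + y) = scaleC a x + scaleC a y"
    and scaleC_scaleC: "scaleC a (scaleC b x) = scaleC (a * b) x"
    and scaleC_mult_left: "scaleC a x * y = scaleC a (x * y)"
    and scaleC_mult_right: "x * scaleC a y = scaleC a (x * y)"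
    and norm_scaleC: "norm (scaleC a x) = cmod a * norm x"
    and cstar_cstar: "cstar (cstar x) = x"
    and cstar_add: "cstar (x + y) = cstar x + cstar y"
    and cstar_mult: "cstar (x * y) = cstar y * cstar x"
    and cstar_scaleC: "cstar (scaleC a x) = scaleC (cnj a) (cstar x)"
    and cstar_identity: "norm (cstar x * x) = (norm x)\<^sup>2"

definition simple_graph :: "('v \<Rightarrow> 'v \<Rightarrow> bool) \<Rightarrow> bool" where
  "simple_graph E \<longleftrightarrow> (\<forall>x y. E x y \<longrightarrow> E y x) \<and> (\<forall>x. \<not> E x x)"

definition adjm :: "('v \<Rightarrow> 'v \<Rightarrow> bool) \<Rightarrow> 'v \<Rightarrow> 'v \<Rightarrow> 'a::cstar_algebra" where
  "adjm E x y = (if E x y then 1 else 0)"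

definition quantum_perm :: "('v::finite \<Rightarrow> 'v \<Rightarrow> 'a::cstar_algebra) \<Rightarrow> bool" where
  "quantum_perm u \<longleftrightarrow>
     (\<forall>i j. u i j = cstar (u i j) \<and> u i j * u i j = u i j) \<and>
     (\<forall>i. (\<Sum>k\<in>UNIV. u i k) = 1) \<and> (\<forall>i. (\<Sum>k\<in>UNIV. u k i) = 1)"

definition intertwines ::
  "('v::finite \<Rightarrow> 'v \<Rightarrow> bool) \<Rightarrow> ('v \<Rightarrow> 'v \<Rightarrow> bool) \<Rightarrow> ('v \<Rightarrow> 'v \<Rightarrow> 'a::cstar_algebra) \<Rightarrow> bool" where
  "intertwines E1 E2 u \<longleftrightarrow>
     (\<forall>a b. (\<Sum>c\<in>UNIV. adjm E1 a c * u c b) = (\<Sum>c\<in>UNIV. u a c * adjm E2 c b))"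

definition quantum_iso_over ::
  "'a::cstar_algebra itself \<Rightarrow> ('v::finite \<Rightarrow> 'v \<Rightarrow> bool) \<Rightarrow> ('v \<Rightarrow> 'v \<Rightarrow> bool) \<Rightarrow> bool" where
  "quantum_iso_over T E1 E2 \<longleftrightarrow>
     (\<exists>u :: 'v \<Rightarrow> 'v \<Rightarrow> 'a. quantum_perm u \<and> intertwines E1 E2 u)"

definition is_partition_idx :: "('i \<Rightarrow> 'x set) \<Rightarrow> 'i set \<Rightarrow> 'x set \<Rightarrow> bool" where
  "is_partition_idx P I X \<longleftrightarrow>
     (\<forall>i\<in>I. P i \<noteq> {}) \<and> (\<forall>i\<in>I. \<forall>j\<in>I. i \<noteq> j \<longrightarrow> P i \<inter> P j = {}) \<and> (\<Union>i\<in>I. P i) = X"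

definition gm_cond ::
  "('v \<Rightarrow> 'v \<Rightarrow> bool) \<Rightarrow> (nat \<Rightarrow> 'v set) \<Rightarrow> nat \<Rightarrow> 'v set \<Rightarrow> bool" where
  "gm_cond E C k D \<longleftrightarrow>
     (\<forall>i\<in>{1..k}. \<forall>j\<in>{1..k}. \<forall>x\<in>C i. \<forall>y\<in>C i.
        card {z\<in>C j. E x z} = card {z\<in>C j. E y z}) \<and>
     (\<forall>v\<in>D. \<forall>i\<in>{1..k}.
        card {z\<in>C i. E v z} = 0 \<or> 2 * card {z\<in>C i. E v z} = card (C i)
        \<or> card {z\<in>C i. E v z} = card (C i))"

definition gm_flip ::
  "('v \<Rightarrow> 'v \<Rightarrow> bool) \<Rightarrow> (nat \<Rightarrow> 'v set) \<Rightarrow> nat \<Rightarrow> 'v set \<Rightarrow> 'v \<Rightarrow> 'v \<Rightarrow> bool" where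
  "gm_flip E C k D v w \<longleftrightarrow>
     v \<in> D \<and> (\<exists>i\<in>{1..k}. w \<in> C i \<and> 2 * card {z\<in>C i. E v z} = card (C i))"

definition gm_switch ::
  "('v \<Rightarrow> 'v \<Rightarrow> bool) \<Rightarrow> (nat \<Rightarrow> 'v set) \<Rightarrow> nat \<Rightarrow> 'v set \<Rightarrow> 'v \<Rightarrow> 'v \<Rightarrow> bool" where
  "gm_switch E C k D x y =
     (if gm_flip E C k D x y \<or> gm_flip E C k D y x then \<not> E x y else E x y)"

end

theory Submission
  imports Defs
begin

text \<open>Let \<open>Q\<close> be the matrix that is the identity on \<open>D\<close> and \<open>(2/n\<^sub>i) J - I\<close> on each
  \<open>C\<^sub>i\<close>, where \<open>J\<close> is the all-ones matrix. The Godsil--McKay conditions are exactly what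
  is needed for \<open>Q A\<^sub>G Q\<close> to be the adjacency matrix of the switched graph. As \<open>u\<close> is
  block diagonal for a partition refining \<open>\<pi>\<close> and all its row and column sums are 1, each
  of its diagonal blocks with respect to \<open>\<pi>\<close> also has row and column sums 1, so \<open>u\<close>
  commutes with \<open>Q\<close>; hence \<open>u (Q A\<^sub>G\<^sub>1 Q) = (Q A\<^sub>G\<^sub>2 Q) u\<close>. Adjacency matrices are symmetric
  with central entries, so the transpose of \<open>u\<close> is a quantum permutation matrix
  intertwining the switched graphs in the direction quantum isomorphism asks for.\<close>

definition mat_mult :: "('v::finite \<Rightarrow> 'v \<Rightarrow> 'a::semiring_0) \<Rightarrow> ('v \<Rightarrow> 'v \<Rightarrow> 'a) \<Rightarrow> 'v \<Rightarrow> 'v \<Rightarrow> 'a"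
    (infixl "\<star>" 70) where
  "(X \<star> Y) a b = (\<Sum>c\<in>UNIV. X a c * Y c b)"

lemma mat_mult_assoc: "X \<star> Y \<star> Z = X \<star> (Y \<star> Z)"
  unfolding mat_mult_def
  by (intro ext) (simp add: sum_distrib_left sum_distrib_right mult.assoc, rule sum.swap)

lemma mat_mult_conj_intertwine:
  assumes "u \<star> A = B \<star> u" and "u \<star> Q = Q \<star> u"
  shows "u \<star> (Q \<star> A \<star> Q) = Q \<star> B \<star> Q \<star> u"
  using assms by (metis mat_mult_assoc)

definition of_real_mat :: "('v \<Rightarrow> 'w \<Rightarrow> real) \<Rightarrow> 'v \<Rightarrow> 'w \<Rightarrow> 'a::real_algebra_1" where
  "of_real_mat P x y = of_real (P x y)"

lemma of_real_mat_real [simp]: "(of_real_mat P :: 'v \<Rightarrow> 'w \<Rightarrow> real) = P"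
  by (simp add: of_real_mat_def fun_eq_iff)

lemma of_real_mat_mult: "of_real_mat (P \<star> R) = of_real_mat P \<star> of_real_mat R"
  by (simp add: of_real_mat_def mat_mult_def fun_eq_iff)

lemma of_real_mult_commute: "of_real r * x = x * (of_real r :: 'a::real_algebra_1)"
  by (simp add: of_real_def)

definition adjacency :: "('v \<Rightarrow> 'v \<Rightarrow> bool) \<Rightarrow> 'v \<Rightarrow> 'v \<Rightarrow> 'a::zero_neq_one" where
  "adjacency E x y = of_bool (E x y)"

lemma adjm_eq_adjacency: "adjm E = adjacency E"
  by (simp add: adjm_def adjacency_def fun_eq_iff)

lemma of_real_mat_adjacency: "of_real_mat (adjacency E) = adjacency E"
  by (simp add: of_real_mat_def adjacency_def fun_eq_iff)

definition cell_matrix :: "('v \<Rightarrow> 'i) \<Rightarrow> ('i \<Rightarrow> real) \<Rightarrow> ('i \<Rightarrow> real) \<Rightarrow> 'v \<Rightarrow> 'v \<Rightarrow> real" where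
  "cell_matrix cl p q x y = (if x = y then p (cl x) else 0) + (if cl x = cl y then q (cl x) else 0)"

lemma cell_matrix_mult:
  fixes M :: "'v::finite \<Rightarrow> 'v \<Rightarrow> 'a::real_algebra_1"
  shows "(of_real_mat (cell_matrix cl p q) \<star> M) x y =
    of_real (p (cl x)) * M x y + of_real (q (cl x)) * (\<Sum>c | cl c = cl x. M c y)"
proof -
  have "(of_real_mat (cell_matrix cl p q) \<star> M) x y =
      (\<Sum>c\<in>UNIV. (if c = x then of_real (p (cl x)) * M c y else 0)
        + (if cl c = cl x then of_real (q (cl x)) * M c y else 0))"
    unfolding mat_mult_def
    by (intro sum.cong) (auto simp: of_real_mat_def cell_matrix_def distrib_right)
  then show ?thesis
    by (simp add: sum.distrib sum.If_cases sum_distrib_left)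
qed

lemma mult_cell_matrix:
  fixes M :: "'v::finite \<Rightarrow> 'v \<Rightarrow> 'a::real_algebra_1"
  shows "(M \<star> of_real_mat (cell_matrix cl p q)) x y =
    M x y * of_real (p (cl y)) + (\<Sum>c | cl c = cl y. M x c) * of_real (q (cl y))"
proof -
  have "(M \<star> of_real_mat (cell_matrix cl p q)) x y =
      (\<Sum>c\<in>UNIV. (if c = y then M x c * of_real (p (cl y)) else 0)
        + (if cl c = cl y then M x c * of_real (q (cl y)) else 0))"
    unfolding mat_mult_def
    by (intro sum.cong) (auto simp: of_real_mat_def cell_matrix_def distrib_left)
  then show ?thesis
    by (simp add: sum.distrib sum.If_cases sum_distrib_right)
qed

lemma block_diagonal_row_sum:
  fixes u :: "'v::finite \<Rightarrow> 'v \<Rightarrow> 'a::comm_monoid_add"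
  assumes "(\<Sum>c\<in>UNIV. u x c) = r" and "\<And>a b. cl a \<noteq> cl b \<Longrightarrow> u a b = 0"
  shows "(\<Sum>c | cl c = j. u x c) = (if cl x = j then r else 0)"
proof (cases "cl x = j")
  case True
  then have "(\<Sum>c | cl c = j. u x c) = (\<Sum>c\<in>UNIV. u x c)"
    using assms(2) by (intro sum.mono_neutral_left) auto
  with True assms(1) show ?thesis by simp
qed (use assms(2) in \<open>auto intro: sum.neutral\<close>)

lemma block_diagonal_col_sum:
  fixes u :: "'v::finite \<Rightarrow> 'v \<Rightarrow> 'a::comm_monoid_add"
  assumes "(\<Sum>c\<in>UNIV. u c y) = r" and "\<And>a b. cl a \<noteq> cl b \<Longrightarrow> u a b = 0"
  shows "(\<Sum>c | cl c = j. u c y) = (if cl y = j then r else 0)"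
  using block_diagonal_row_sum[where u = "\<lambda>a b. u b a" and cl = cl] assms by metis

text \<open>A block diagonal matrix with row and column sums 1 commutes with the all-ones matrix
  of every block, hence with every matrix that is a combination of the identity and these.\<close>
lemma block_diagonal_commutes_cell_matrix:
  fixes u :: "'v::finite \<Rightarrow> 'v \<Rightarrow> 'a::real_algebra_1"
  assumes rows: "\<And>i. (\<Sum>c\<in>UNIV. u i c) = 1" and cols: "\<And>i. (\<Sum>c\<in>UNIV. u c i) = 1"
    and blk: "\<And>a b. cl a \<noteq> cl b \<Longrightarrow> u a b = 0"
  shows "u \<star> of_real_mat (cell_matrix cl p q) = of_real_mat (cell_matrix cl p q) \<star> u"
proof (intro ext)
  fix x y
  have "(\<Sum>c | cl c = cl y. u x c) = (if cl x = cl y then 1 else 0)"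
    by (rule block_diagonal_row_sum[OF rows blk])
  moreover have "(\<Sum>c | cl c = cl x. u c y) = (if cl y = cl x then 1 else 0)"
    by (rule block_diagonal_col_sum[OF cols blk])
  ultimately show "(u \<star> of_real_mat (cell_matrix cl p q)) x y = (of_real_mat (cell_matrix cl p q) \<star> u) x y"
    using blk[of x y]
    by (cases "cl x = cl y") (simp_all add: cell_matrix_mult mult_cell_matrix of_real_mult_commute)
qed

lemma cell_matrix_conj:
  fixes A :: "'v::finite \<Rightarrow> 'v \<Rightarrow> real"
  shows "(cell_matrix cl p q \<star> A \<star> cell_matrix cl p q) x y =
    p (cl x) * p (cl y) * A x y + p (cl x) * q (cl y) * (\<Sum>d | cl d = cl y. A x d)
    + q (cl x) * p (cl y) * (\<Sum>c | cl c = cl x. A c y)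
    + q (cl x) * q (cl y) * (\<Sum>c | cl c = cl x. \<Sum>d | cl d = cl y. A c d)"
proof -
  have left: "(cell_matrix cl p q \<star> A) z y' = p (cl z) * A z y' + q (cl z) * (\<Sum>c | cl c = cl z. A c y')"
    for z y'
    using cell_matrix_mult[where 'a = real] by simp
  have "(cell_matrix cl p q \<star> A \<star> cell_matrix cl p q) x y =
      (cell_matrix cl p q \<star> A) x y * p (cl y) + (\<Sum>d | cl d = cl y. (cell_matrix cl p q \<star> A) x d) * q (cl y)"
    using mult_cell_matrix[where 'a = real] by simp
  then show ?thesis
    by (simp add: left sum.distrib sum_distrib_left sum_distrib_right algebra_simps) (rule sum.swap)
qed

text \<open>A partition of the vertices is encoded by a cell-index function \<open>cl\<close>; the cell with
  index \<open>d\<close> plays the role of \<open>D\<close>.\<close>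
definition switching_matrix :: "('v \<Rightarrow> 'i) \<Rightarrow> 'i \<Rightarrow> 'v \<Rightarrow> 'v \<Rightarrow> real" where
  "switching_matrix cl d = cell_matrix cl (\<lambda>i. if i = d then 1 else -1)
     (\<lambda>i. if i = d then 0 else 2 / real (card {z. cl z = i}))"

definition nbrs_in :: "('v \<Rightarrow> 'v \<Rightarrow> bool) \<Rightarrow> ('v \<Rightarrow> 'i) \<Rightarrow> 'v \<Rightarrow> 'i \<Rightarrow> nat" where
  "nbrs_in E cl x j = card {z. cl z = j \<and> E x z}"

definition godsil_mckay_cells :: "('v \<Rightarrow> 'v \<Rightarrow> bool) \<Rightarrow> ('v \<Rightarrow> 'i) \<Rightarrow> 'i \<Rightarrow> bool" where
  "godsil_mckay_cells E cl d \<longleftrightarrow>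
     (\<forall>x y j. cl x = cl y \<and> cl x \<noteq> d \<and> j \<noteq> d \<longrightarrow> nbrs_in E cl x j = nbrs_in E cl y j) \<and>
     (\<forall>x j. cl x = d \<and> j \<noteq> d \<longrightarrow>
        nbrs_in E cl x j = 0 \<or> 2 * nbrs_in E cl x j = card {z. cl z = j}
        \<or> nbrs_in E cl x j = card {z. cl z = j})"

lemma godsil_mckay_cells_regular:
  assumes "godsil_mckay_cells E cl d" and "cl w = cl v" and "cl v \<noteq> d" and "j \<noteq> d"
  shows "nbrs_in E cl w j = nbrs_in E cl v j"
proof -
  have "\<forall>x y j. cl x = cl y \<and> cl x \<noteq> d \<and> j \<noteq> d \<longrightarrow> nbrs_in E cl x j = nbrs_in E cl y j"
    using assms(1) unfolding godsil_mckay_cells_def by (rule conjunct1)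
  from this[rule_format, of w v j] assms(2-4) show ?thesis
    by simp
qed

lemma godsil_mckay_cells_halving:
  assumes "godsil_mckay_cells E cl d" and "cl v = d" and "j \<noteq> d"
  shows "nbrs_in E cl v j = 0 \<or> 2 * nbrs_in E cl v j = card {z. cl z = j}
    \<or> nbrs_in E cl v j = card {z. cl z = j}"
  using assms unfolding godsil_mckay_cells_def by blast

definition halves_cell :: "('v \<Rightarrow> 'v \<Rightarrow> bool) \<Rightarrow> ('v \<Rightarrow> 'i) \<Rightarrow> 'i \<Rightarrow> 'v \<Rightarrow> 'v \<Rightarrow> bool" where
  "halves_cell E cl d x y \<longleftrightarrow>
     cl x = d \<and> cl y \<noteq> d \<and> 2 * nbrs_in E cl x (cl y) = card {z. cl z = cl y}"

definition cell_switch :: "('v \<Rightarrow> 'v \<Rightarrow> bool) \<Rightarrow> ('v \<Rightarrow> 'i) \<Rightarrow> 'i \<Rightarrow> 'v \<Rightarrow> 'v \<Rightarrow> bool" where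
  "cell_switch E cl d x y =
     (if halves_cell E cl d x y \<or> halves_cell E cl d y x then \<not> E x y else E x y)"

lemma cell_switch_sym: "cell_switch E cl d x y \<longleftrightarrow> cell_switch E cl d y x"
  if "\<And>x y. E x y \<longleftrightarrow> E y x"
  using that by (auto simp: cell_switch_def)

lemma halving_indicator_identity:
  assumes "finite X" and "w \<in> X"
    and "card {z\<in>X. P z} = 0 \<or> 2 * card {z\<in>X. P z} = card X \<or> card {z\<in>X. P z} = card X"
  shows "2 / real (card X) * real (card {z\<in>X. P z}) - of_bool (P w) =
    of_bool (if 2 * card {z\<in>X. P z} = card X then \<not> P w else P w)"
proof -
  have pos: "card X > 0"
    using assms(1,2) card_gt_0_iff by blast
  from assms(3) consider "card {z\<in>X. P z} = 0" | "2 * card {z\<in>X. P z} = card X"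
    | "card {z\<in>X. P z} = card X" by metis
  then show ?thesis
  proof cases
    case 1
    then have "\<not> P w"
      using assms(1,2) by simp
    with 1 pos show ?thesis by simp
  next
    case 2
    then have "2 / real (card X) * real (card {z\<in>X. P z}) = 1"
      using pos by (simp add: field_simps flip: of_nat_mult)
    with 2 show ?thesis by simp
  next
    case 3
    then have "{z\<in>X. P z} = X"
      using assms(1) by (intro card_subset_eq) auto
    with 3 pos assms(2) show ?thesis by auto
  qed
qed

lemma sum_adjacency_cell:
  fixes E :: "'v::finite \<Rightarrow> 'v \<Rightarrow> bool"
  shows "(\<Sum>z | cl z = j. adjacency E x z) = real (nbrs_in E cl x j)"
  by (simp add: adjacency_def nbrs_in_def Int_def)

lemma sum_adjacency_cell_col:
  fixes E :: "'v::finite \<Rightarrow> 'v \<Rightarrow> bool"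
  assumes "\<And>x y. E x y \<longleftrightarrow> E y x"
  shows "(\<Sum>z | cl z = j. adjacency E z x) = real (nbrs_in E cl x j)"
  using sum_adjacency_cell[where cl = cl and j = j and E = E and x = x] assms
  by (simp add: adjacency_def)

lemma cell_edges_double_count:
  fixes E :: "'v::finite \<Rightarrow> 'v \<Rightarrow> bool"
  assumes "\<And>x y. E x y \<longleftrightarrow> E y x"
  shows "(\<Sum>c | cl c = i. real (nbrs_in E cl c j)) = (\<Sum>c | cl c = j. real (nbrs_in E cl c i))"
proof -
  have "(\<Sum>c | cl c = i. real (nbrs_in E cl c j)) =
      (\<Sum>c | cl c = i. \<Sum>e | cl e = j. adjacency E c e)"
    by (simp add: sum_adjacency_cell)
  also have "\<dots> = (\<Sum>e | cl e = j. real (nbrs_in E cl e i))"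
    by (subst sum.swap) (simp add: sum_adjacency_cell_col[where E = E, OF assms])
  finally show ?thesis .
qed

lemma sum_nbrs_in_regular_cell:
  assumes "\<And>w. cl w = cl v \<Longrightarrow> nbrs_in E cl w j = nbrs_in E cl v j"
  shows "(\<Sum>c | cl c = cl v. real (nbrs_in E cl c j)) =
    real (card {z. cl z = cl v}) * real (nbrs_in E cl v j)"
proof -
  have "(\<Sum>c | cl c = cl v. real (nbrs_in E cl c j)) = (\<Sum>c | cl c = cl v. real (nbrs_in E cl v j))"
  proof (rule sum.cong[OF refl])
    fix c assume "c \<in> {c. cl c = cl v}"
    then show "real (nbrs_in E cl c j) = real (nbrs_in E cl v j)"
      using assms[of c] by simp
  qed
  then show ?thesis
    by simp
qed

lemma switching_matrix_conj_adjacency_entry: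
  fixes E :: "'v::finite \<Rightarrow> 'v \<Rightarrow> bool" and cl :: "'v \<Rightarrow> 'i"
  assumes "\<And>x y. E x y \<longleftrightarrow> E y x"
  defines "n \<equiv> \<lambda>j. real (card {z. cl z = j})" and "r \<equiv> \<lambda>v j. real (nbrs_in E cl v j)"
  shows "(switching_matrix cl d \<star> adjacency E \<star> switching_matrix cl d) x y =
      (if cl x = d then 1 else -1) * (if cl y = d then 1 else -1) * adjacency E x y
      + (if cl x = d then 1 else -1) * (if cl y = d then 0 else 2 / n (cl y)) * r x (cl y)
      + (if cl x = d then 0 else 2 / n (cl x)) * (if cl y = d then 1 else -1) * r y (cl x)
      + (if cl x = d then 0 else 2 / n (cl x)) * (if cl y = d then 0 else 2 / n (cl y))
        * (\<Sum>c | cl c = cl x. r c (cl y))"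
  unfolding switching_matrix_def cell_matrix_conj n_def r_def
  by (simp only: sum_adjacency_cell sum_adjacency_cell_col[where E = E, OF assms(1)])

lemma switching_matrix_conj_entry_from_D:
  fixes E :: "'v::finite \<Rightarrow> 'v \<Rightarrow> bool"
  assumes "godsil_mckay_cells E cl d" and "cl v = d" and "cl w \<noteq> d"
  shows "2 / real (card {z. cl z = cl w}) * real (nbrs_in E cl v (cl w)) - adjacency E v w =
    (adjacency (cell_switch E cl d) v w :: real)"
proof -
  have "nbrs_in E cl v (cl w) = card {z \<in> {z. cl z = cl w}. E v z}"
    by (simp add: nbrs_in_def)
  moreover note godsil_mckay_cells_halving[OF assms]
  ultimately show ?thesis
    using halving_indicator_identity[of "{z. cl z = cl w}" w "E v"] assms(2,3)
    by (simp add: adjacency_def cell_switch_def halves_cell_def)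
qed

lemma two_way_count_split:
  fixes a b r t e :: real
  assumes "a > 0" and "b > 0" and "e = a * r" and "e = b * t"
  shows "2 / a * (2 / b) * e = 2 / b * r + 2 / a * t"
proof -
  have "e / a = r"
    using assms(1,3) by simp
  moreover have "e / b = t"
    using assms(2,4) by simp
  moreover have "2 / a * (2 / b) * e = 2 / b * (e / a) + 2 / a * (e / b)"
    using assms(1,2) by (simp add: field_simps)
  ultimately show ?thesis
    by simp
qed

lemma switching_matrix_conj_adjacency:
  fixes E :: "'v::finite \<Rightarrow> 'v \<Rightarrow> bool" and cl :: "'v \<Rightarrow> 'i"
  assumes sym: "\<And>x y. E x y \<longleftrightarrow> E y x" and gm: "godsil_mckay_cells E cl d"
  shows "switching_matrix cl d \<star> adjacency E \<star> switching_matrix cl d = adjacency (cell_switch E cl d)"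
proof (intro ext)
  fix x y
  let ?n = "\<lambda>j. real (card {z. cl z = j})"
  let ?r = "\<lambda>v j. real (nbrs_in E cl v j)"
  note entry = switching_matrix_conj_adjacency_entry[where E = E, OF sym, of cl d x y]
  have n_pos: "?n (cl v) > 0" for v
    using card_gt_0_iff[of "{z. cl z = cl v}"] by auto
  show "(switching_matrix cl d \<star> adjacency E \<star> switching_matrix cl d) x y =
    adjacency (cell_switch E cl d) x y"
  proof (cases "cl x = d"; cases "cl y = d")
    assume "cl x = d" "cl y = d"
    then show ?thesis
      using entry by (simp add: adjacency_def cell_switch_def halves_cell_def)
  next
    assume "cl x = d" "cl y \<noteq> d"
    then show ?thesis
      using entry switching_matrix_conj_entry_from_D[OF gm, of x y] by simp
  next
    assume "cl x \<noteq> d" "cl y = d"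
    moreover have "adjacency (cell_switch E cl d) x y = (adjacency (cell_switch E cl d) y x :: real)"
      using cell_switch_sym[of E cl d x y] sym by (simp add: adjacency_def)
    moreover have "adjacency E x y = (adjacency E y x :: real)"
      using sym by (simp add: adjacency_def)
    ultimately show ?thesis
      using entry switching_matrix_conj_entry_from_D[OF gm, of y x] by simp
  next
    assume x: "cl x \<noteq> d" and y: "cl y \<noteq> d"
    define edges where "edges = (\<Sum>c | cl c = cl x. ?r c (cl y))"
    have "edges = ?n (cl x) * ?r x (cl y)"
      unfolding edges_def by (rule sum_nbrs_in_regular_cell) (rule godsil_mckay_cells_regular[OF gm _ x y])
    moreover have "edges = ?n (cl y) * ?r y (cl x)"
      unfolding edges_def cell_edges_double_count[where E = E, OF sym]
      by (rule sum_nbrs_in_regular_cell) (rule godsil_mckay_cells_regular[OF gm _ y x])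
    ultimately have "2 / ?n (cl x) * (2 / ?n (cl y)) * edges =
        2 / ?n (cl y) * ?r x (cl y) + 2 / ?n (cl x) * ?r y (cl x)"
      by (rule two_way_count_split[OF n_pos n_pos])
    then show ?thesis
      using entry x y by (simp add: adjacency_def cell_switch_def halves_cell_def edges_def)
  qed
qed

lemma simple_graph_sym: "simple_graph E \<Longrightarrow> E x y \<longleftrightarrow> E y x"
  unfolding simple_graph_def by blast

lemma gm_switch_sym: "simple_graph E \<Longrightarrow> gm_switch E C k D x y \<longleftrightarrow> gm_switch E C k D y x"
  unfolding gm_switch_def by (auto simp: simple_graph_sym)

lemma gm_cond_imp_godsil_mckay_cells:
  assumes cells: "\<And>i. i \<in> {1..k+1} \<Longrightarrow> C i = {x. cl x = i}"
    and range: "\<And>x. cl x \<in> {1..k+1}" and D: "D = C (k+1)"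
    and gm: "gm_cond E C k D"
  shows "godsil_mckay_cells E cl (k+1)"
proof -
  have nbrs: "nbrs_in E cl x j = card {z \<in> C j. E x z}" if "j \<in> {1..k}" for x j
    using cells[of j] that by (simp add: nbrs_in_def)
  have empty: "{z. cl z = j} = {}" if "j \<noteq> k+1" "j \<notin> {1..k}" for j
    using range that by fastforce
  have "nbrs_in E cl x j = nbrs_in E cl y j"
    if "cl x = cl y" "cl x \<noteq> k+1" "j \<noteq> k+1" for x y j
  proof (cases "j \<in> {1..k}")
    case True
    have "cl x \<in> {1..k}" "x \<in> C (cl x)" "y \<in> C (cl x)"
      using range[of x] cells[of "cl x"] that by auto
    with True gm show ?thesis
      unfolding gm_cond_def nbrs[OF True] by blast
  qed (use empty that in \<open>simp add: nbrs_in_def\<close>)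
  moreover have "nbrs_in E cl x j = 0 \<or> 2 * nbrs_in E cl x j = card {z. cl z = j}
      \<or> nbrs_in E cl x j = card {z. cl z = j}"
    if "cl x = k+1" "j \<noteq> k+1" for x j
  proof (cases "j \<in> {1..k}")
    case True
    have "x \<in> D"
      using D cells[of "k+1"] that by simp
    moreover have "{z. cl z = j} = C j"
      using cells[of j] True by simp
    ultimately show ?thesis
      using True gm unfolding gm_cond_def nbrs[OF True] by auto
  qed (use empty that in \<open>simp add: nbrs_in_def\<close>)
  ultimately show ?thesis
    unfolding godsil_mckay_cells_def by blast
qed

lemma gm_switch_eq_cell_switch:
  assumes cells: "\<And>i. i \<in> {1..k+1} \<Longrightarrow> C i = {x. cl x = i}"
    and range: "\<And>x. cl x \<in> {1..k+1}" and D: "D = C (k+1)"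
  shows "gm_switch E C k D = cell_switch E cl (k+1)"
proof -
  have "gm_flip E C k D v w \<longleftrightarrow> halves_cell E cl (k+1) v w" for v w
  proof -
    have "v \<in> D \<longleftrightarrow> cl v = k+1"
      using D cells[of "k+1"] by simp
    moreover have "w \<in> C i \<longleftrightarrow> cl w = i" if "i \<in> {1..k}" for i
      using cells[of i] that by simp
    moreover have "cl w \<noteq> k+1 \<longleftrightarrow> cl w \<in> {1..k}"
      using range[of w] by auto
    ultimately show ?thesis
      unfolding gm_flip_def halves_cell_def nbrs_in_def using cells by auto
  qed
  then show ?thesis
    by (simp add: fun_eq_iff gm_switch_def cell_switch_def)
qed

lemma block_diagonal_coarsen:
  assumes S: "is_partition_idx S J I"
    and blk: "\<forall>s\<in>I. \<forall>t\<in>I. \<forall>a\<in>P s. \<forall>b\<in>P t. s \<noteq> t \<longrightarrow> u a b = 0"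
    and "i \<in> J" "j \<in> J" "i \<noteq> j" "a \<in> (\<Union>s\<in>S i. P s)" "b \<in> (\<Union>s\<in>S j. P s)"
  shows "u a b = 0"
proof -
  obtain s t where "s \<in> S i" "t \<in> S j" "a \<in> P s" "b \<in> P t"
    using assms(6,7) by blast
  moreover have "S i \<inter> S j = {}" "S i \<subseteq> I" "S j \<subseteq> I"
    using S assms(3-5) unfolding is_partition_idx_def by auto
  ultimately have "s \<in> I" "t \<in> I" "s \<noteq> t"
    by blast+
  with blk \<open>a \<in> P s\<close> \<open>b \<in> P t\<close> show ?thesis
    by blast
qed

lemma is_partition_idx_coarsen:
  assumes P: "is_partition_idx P I X" and S: "is_partition_idx S J I"
  shows "is_partition_idx (\<lambda>j. \<Union>i\<in>S j. P i) J X"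
proof -
  have P_ne: "P i \<noteq> {}" if "i \<in> I" for i
    using P that unfolding is_partition_idx_def by simp
  have P_dis: "P i \<inter> P i' = {}" if "i \<in> I" "i' \<in> I" "i \<noteq> i'" for i i'
    using P that unfolding is_partition_idx_def by simp
  have S_ne: "S j \<noteq> {}" if "j \<in> J" for j
    using S that unfolding is_partition_idx_def by simp
  have S_dis: "S j \<inter> S j' = {}" if "j \<in> J" "j' \<in> J" "j \<noteq> j'" for j j'
    using S that unfolding is_partition_idx_def by simp
  have S_cov: "(\<Union>j\<in>J. S j) = I"
    using S unfolding is_partition_idx_def by simp
  have "(\<Union>j\<in>J. \<Union>i\<in>S j. P i) = (\<Union>i\<in>(\<Union>j\<in>J. S j). P i)"
    by blast
  also have "\<dots> = X"
    using P S_cov unfolding is_partition_idx_def by simp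
  finally have "(\<Union>j\<in>J. \<Union>i\<in>S j. P i) = X" .
  moreover have "(\<Union>i\<in>S j. P i) \<noteq> {}" if "j \<in> J" for j
    using S_ne[OF that] S_cov P_ne that by blast
  moreover have "(\<Union>i\<in>S j. P i) \<inter> (\<Union>i\<in>S j'. P i) = {}"
    if "j \<in> J" "j' \<in> J" "j \<noteq> j'" for j j'
    using S_dis[OF that] S_cov P_dis that by blast
  ultimately show ?thesis
    unfolding is_partition_idx_def by blast
qed

lemma is_partition_idx_cell_function:
  assumes "is_partition_idx P I UNIV"
  obtains cl where "\<And>x. cl x \<in> I" and "\<And>i. i \<in> I \<Longrightarrow> P i = {x. cl x = i}"
proof
  define cl where "cl x = (SOME i. i \<in> I \<and> x \<in> P i)" for x
  have "\<exists>i. i \<in> I \<and> x \<in> P i" for x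
    using assms unfolding is_partition_idx_def by blast
  then have cl: "cl x \<in> I \<and> x \<in> P (cl x)" for x
    unfolding cl_def by (rule someI_ex)
  then show "cl x \<in> I" for x
    by blast
  show "P i = {x. cl x = i}" if "i \<in> I" for i
  proof (intro set_eqI iffI)
    fix x assume "x \<in> P i"
    with cl[of x] that assms show "x \<in> {x. cl x = i}"
      unfolding is_partition_idx_def by auto
  next
    fix x assume "x \<in> {x. cl x = i}"
    with cl[of x] show "x \<in> P i"
      by simp
  qed
qed

lemma coarsened_partition_cell_function:
  assumes P: "is_partition_idx P I UNIV" and S: "is_partition_idx S J I"
    and blk: "\<forall>s\<in>I. \<forall>t\<in>I. \<forall>a\<in>P s. \<forall>b\<in>P t. s \<noteq> t \<longrightarrow> u a b = 0"
  obtains cl where "\<And>x. cl x \<in> J" and "\<And>j. j \<in> J \<Longrightarrow> (\<Union>i\<in>S j. P i) = {x. cl x = j}"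
    and "\<And>a b. cl a \<noteq> cl b \<Longrightarrow> u a b = 0"
proof -
  obtain cl where range: "\<And>x. cl x \<in> J" and cells: "\<And>j. j \<in> J \<Longrightarrow> (\<Union>i\<in>S j. P i) = {x. cl x = j}"
    using is_partition_idx_cell_function[OF is_partition_idx_coarsen[OF P S]] by blast
  moreover have "u a b = 0" if "cl a \<noteq> cl b" for a b
  proof -
    have "a \<in> (\<Union>i\<in>S (cl a). P i)" "b \<in> (\<Union>i\<in>S (cl b). P i)"
      using cells range by auto
    then show ?thesis
      by (rule block_diagonal_coarsen[OF S blk range range that])
  qed
  ultimately show ?thesis
    by (rule that)
qed

lemma quantum_perm_transpose: "quantum_perm u \<Longrightarrow> quantum_perm (\<lambda>a b. u b a)"
  unfolding quantum_perm_def by simp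

lemma adjm_central: "adjm E x y * z = z * adjm E x y"
  by (simp add: adjm_def)

lemma adjm_sym: "(\<And>x y. E x y \<longleftrightarrow> E y x) \<Longrightarrow> adjm E x y = adjm E y x"
  by (simp add: adjm_def)

lemma intertwines_transpose:
  fixes u :: "'v::finite \<Rightarrow> 'v \<Rightarrow> 'a::cstar_algebra"
  assumes symE: "\<And>x y. E x y \<longleftrightarrow> E y x" and symE': "\<And>x y. E' x y \<longleftrightarrow> E' y x"
    and "u \<star> adjm E = adjm E' \<star> u"
  shows "intertwines E E' (\<lambda>a b. u b a)"
  unfolding intertwines_def
proof (intro allI)
  fix a b
  have "(\<Sum>c\<in>UNIV. adjm E a c * u b c) = (u \<star> adjm E) b a"
    unfolding mat_mult_def by (intro sum.cong refl) (metis adjm_central adjm_sym symE)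
  also have "\<dots> = (adjm E' \<star> u) b a"
    using assms(3) by simp
  also have "\<dots> = (\<Sum>c\<in>UNIV. u c a * adjm E' c b)"
    unfolding mat_mult_def by (intro sum.cong refl) (metis adjm_central adjm_sym symE')
  finally show "(\<Sum>c\<in>UNIV. adjm E a c * u b c) = (\<Sum>c\<in>UNIV. u c a * adjm E' c b)" .
qed

lemma quantum_iso_over_transpose:
  fixes u :: "'v::finite \<Rightarrow> 'v \<Rightarrow> 'a::cstar_algebra"
  assumes "quantum_perm u" and "\<And>x y. E x y \<longleftrightarrow> E y x" and "\<And>x y. E' x y \<longleftrightarrow> E' y x"
    and "u \<star> adjm E = adjm E' \<star> u"
  shows "quantum_iso_over TYPE('a) E E'"
  using intertwines_transpose[where E = E and E' = E', OF assms(2-4)] quantum_perm_transpose[OF assms(1)]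
  unfolding quantum_iso_over_def by blast

lemma adjm_gm_switch:
  assumes cells: "\<And>i. i \<in> {1..k+1} \<Longrightarrow> C i = {x. cl x = i}"
    and range: "\<And>x. cl x \<in> {1..k+1}" and D: "D = C (k+1)"
    and "simple_graph E" and "gm_cond E C k D"
  shows "adjm (gm_switch E C k D) =
    of_real_mat (switching_matrix cl (k+1)) \<star> adjm E \<star> of_real_mat (switching_matrix cl (k+1))"
proof -
  have switch: "gm_switch E C k D = cell_switch E cl (k+1)"
    by (rule gm_switch_eq_cell_switch[OF cells range D])
  have "godsil_mckay_cells E cl (k+1)"
    by (rule gm_cond_imp_godsil_mckay_cells[OF cells range D assms(5)])
  then have conj: "switching_matrix cl (k+1) \<star> adjacency E \<star> switching_matrix cl (k+1)
      = adjacency (cell_switch E cl (k+1))"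
    by (rule switching_matrix_conj_adjacency[where E = E, OF simple_graph_sym[OF assms(4)]])
  have "adjm (gm_switch E C k D) = of_real_mat (adjacency (cell_switch E cl (k+1)))"
    unfolding switch by (simp only: adjm_eq_adjacency of_real_mat_adjacency)
  also have "\<dots> = of_real_mat (switching_matrix cl (k+1) \<star> adjacency E \<star> switching_matrix cl (k+1))"
    by (simp only: conj)
  also have "\<dots> = of_real_mat (switching_matrix cl (k+1)) \<star> adjm E \<star> of_real_mat (switching_matrix cl (k+1))"
    by (simp only: of_real_mat_mult of_real_mat_adjacency adjm_eq_adjacency)
  finally show ?thesis .
qed

theorem theorem4p3:
  fixes E1 E2 :: "'v::finite \<Rightarrow> 'v \<Rightarrow> bool"
    and Vp :: "nat \<Rightarrow> 'v set" and m k :: nat and S :: "nat \<Rightarrow> nat set"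
    and u :: "'v \<Rightarrow> 'v \<Rightarrow> 'a::cstar_algebra"
    and C :: "nat \<Rightarrow> 'v set" and D :: "'v set"
  assumes "simple_graph E1" and "simple_graph E2"
    and "is_partition_idx Vp {1..m} UNIV"
    and "quantum_perm u"
    and "\<forall>a b. (\<Sum>c\<in>UNIV. u a c * adjm E1 c b) = (\<Sum>c\<in>UNIV. adjm E2 a c * u c b)"
    and "\<forall>s\<in>{1..m}. \<forall>t\<in>{1..m}. \<forall>a\<in>Vp s. \<forall>b\<in>Vp t. s \<noteq> t \<longrightarrow> u a b = 0"
    and "is_partition_idx S {1..k+1} {1..m}"
    and "C = (\<lambda>i. \<Union>s\<in>S i. Vp s)"
    and "D = (\<Union>s\<in>S (k+1). Vp s)"
    and "gm_cond E1 C k D" and "gm_cond E2 C k D"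
  shows "quantum_iso_over TYPE('a) (gm_switch E1 C k D) (gm_switch E2 C k D)"
proof -
  obtain cl where range: "\<And>x. cl x \<in> {1..k+1}"
    and cells': "\<And>i. i \<in> {1..k+1} \<Longrightarrow> (\<Union>s\<in>S i. Vp s) = {x. cl x = i}"
    and blk: "\<And>a b. cl a \<noteq> cl b \<Longrightarrow> u a b = 0"
    using coarsened_partition_cell_function[OF assms(3,7,6)] by blast
  have cells: "\<And>i. i \<in> {1..k+1} \<Longrightarrow> C i = {x. cl x = i}" and D: "D = C (k+1)"
    using cells' assms(8,9) by simp_all
  let ?Q = "of_real_mat (switching_matrix cl (k+1)) :: 'v \<Rightarrow> 'v \<Rightarrow> 'a"
  have "u \<star> adjm E1 = adjm E2 \<star> u"
    using assms(5) by (simp add: mat_mult_def fun_eq_iff)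
  moreover have "u \<star> ?Q = ?Q \<star> u"
    using assms(4) blk unfolding switching_matrix_def quantum_perm_def
    by (intro block_diagonal_commutes_cell_matrix) auto
  ultimately have "u \<star> (?Q \<star> adjm E1 \<star> ?Q) = ?Q \<star> adjm E2 \<star> ?Q \<star> u"
    by (rule mat_mult_conj_intertwine)
  then have "u \<star> adjm (gm_switch E1 C k D) = adjm (gm_switch E2 C k D) \<star> u"
    by (simp only: adjm_gm_switch[OF cells range D assms(1,10)] adjm_gm_switch[OF cells range D assms(2,11)])
  then show ?thesis
    by (rule quantum_iso_over_transpose[where E = "gm_switch E1 C k D" and E' = "gm_switch E2 C k D",
      OF assms(4) gm_switch_sym[OF assms(1)] gm_switch_sym[OF assms(2)]])
qed

end
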